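(* Let $p=2$, $a\in\mathbb{C}_2$, $a\ne0$, $A=|a|_2$, $f(x)=\frac{ax}{x^2+a}$, and $t_1=\sqrt{-2a}$, $t_2=-\sqrt{-2a}$. Then for every $0<r\le\frac{\sqrt A}{2\sqrt2}$, $$f(S_r(t_1)\setminus\mathcal P_2)\subseteq S_r(t_2),\qquad f(S_r(t_2)\setminus\mathcal P_2)\subseteq S_r(t_1).$$
   Context: $S_r(t)=\{x\in\mathbb{C}_2:|x-t|_2=r\}$. $f$ is defined on $\mathbb{C}_p\setminus\{\pm\sqrt{-a}\}$ and $f\circ f$ on $\mathbb{C}_p$ minus the points $\pm\sqrt{-a}$ and $\pm\sqrt{\frac{(-3\pm\sqrt5)a}{2}}$. $\mathcal P_2=\{x\in\mathbb{C}_p:\exists n\in\mathbb{N},\ f^n(x)\in\{\pm\sqrt{-a},\ \pm\sqrt{(-3\pm\sqrt5)a/2}\}\}$. The points $t_1,t_2$ form a $2$-cycle of $f$. *)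

theory Defs
  imports Complex_Main "HOL-Computational_Algebra.Polynomial"
begin

text \<open>C_2 is not in the library. We model it abstractly: a field of characteristic 0
 with a non-archimedean absolute value, complete, algebraically closed, normalised by |2| = 1/2.\<close>

definition nonarch_abs :: "('a::field \<Rightarrow> real) \<Rightarrow> bool" where
  "nonarch_abs v \<longleftrightarrow>
     (\<forall>x. 0 \<le> v x) \<and> (\<forall>x. v x = 0 \<longleftrightarrow> x = 0) \<and>
     (\<forall>x y. v (x * y) = v x * v y) \<and> (\<forall>x y. v (x + y) \<le> max (v x) (v y))"

definition abs_complete :: "('a::field \<Rightarrow> real) \<Rightarrow> bool" where
  "abs_complete v \<longleftrightarrow>
     (\<forall>X :: nat \<Rightarrow> 'a. (\<forall>e>0. \<exists>N. \<forall>m\<ge>N. \<forall>n\<ge>N. v (X m - X n) < e) \<longrightarrow>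
        (\<exists>L. \<forall>e>0. \<exists>N. \<forall>n\<ge>N. v (X n - L) < e))"

definition alg_closed :: "'a::field itself \<Rightarrow> bool" where
  "alg_closed _ \<longleftrightarrow> (\<forall>p :: 'a poly. 1 \<le> degree p \<longrightarrow> (\<exists>x. poly p x = 0))"

definition C2_like :: "('a::field_char_0 \<Rightarrow> real) \<Rightarrow> bool" where
  "C2_like v \<longleftrightarrow> nonarch_abs v \<and> abs_complete v \<and> alg_closed TYPE('a) \<and> v 2 = 1/2"

definition sphere_v :: "('a::field \<Rightarrow> real) \<Rightarrow> real \<Rightarrow> 'a \<Rightarrow> 'a set" where
  "sphere_v v r t = {x. v (x - t) = r}"

text \<open>The map f(x) = a x / (x^2 + a) (total in HOL; value 0 at the poles, which are
 excluded anyway via P_2).\<close>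
definition fmap :: "'a::field \<Rightarrow> 'a \<Rightarrow> 'a" where
  "fmap a x = a * x / (x^2 + a)"

text \<open>Poles of f and of f\<circ>f: \<plusminus>sqrt(-a) and \<plusminus>sqrt((-3 \<plusminus> sqrt 5) a / 2).\<close>
definition poles2 :: "'a::field \<Rightarrow> 'a set" where
  "poles2 a = {y. y^2 = - a \<or> (\<exists>s. s^2 = 5 \<and> y^2 = (-3 + s) * a / 2)}"

definition P2 :: "'a::field \<Rightarrow> 'a set" where
  "P2 a = {x. \<exists>n::nat. (fmap a ^^ n) x \<in> poles2 a}"

end

theory Submission
  imports Defs
begin

text \<open>Write \<open>x = t + h\<close> with \<open>t\<^sup>2 = -2a\<close>, so that \<open>f(t) = -t\<close>. Then
  \<open>f(x) + t = h (t h - 3a) / (2 t h + h\<^sup>2 - a)\<close>.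
  Since \<open>|2| < 1\<close> we have \<open>|3| = 1\<close> and \<open>|t|\<^sup>2 < |a|\<close>; hence for \<open>|h|\<^sup>2 < |a|\<close> the
  terms containing \<open>a\<close> strictly dominate in numerator and denominator, and the ultrametric
  inequality gives \<open>|f(x) + t| = |h| |a| / |a| = |h|\<close>. The paper's bound on \<open>r\<close> implies
  \<open>r\<^sup>2 < |a|\<close>, and the spheres never meet the poles.\<close>

lemma fmap_two_cycle_shift:
  fixes a t h :: "'a::field"
  assumes t: "t\<^sup>2 = -2 * a" and den: "- a + (2 * t * h + h\<^sup>2) \<noteq> 0"
  shows "fmap a (t + h) + t = h * (- (3 * a) + t * h) / (- a + (2 * t * h + h\<^sup>2))"
proof -
  have t0: "t\<^sup>2 + 2 * a = 0"
    using t by simp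
  have "(t + h)\<^sup>2 + a = - a + (2 * t * h + h\<^sup>2) + (t\<^sup>2 + 2 * a)"
    by (simp add: power2_eq_square algebra_simps)
  with t0 have den_eq: "(t + h)\<^sup>2 + a = - a + (2 * t * h + h\<^sup>2)"
    by simp
  have "a * (t + h) + t * ((t + h)\<^sup>2 + a)
      = h * (- (3 * a) + t * h) + (t + 2 * h) * (t\<^sup>2 + 2 * a)"
    by (simp add: power2_eq_square algebra_simps)
  with t0 have num_eq: "a * (t + h) + t * ((t + h)\<^sup>2 + a) = h * (- (3 * a) + t * h)"
    by simp
  have "fmap a (t + h) + t = (a * (t + h) + t * ((t + h)\<^sup>2 + a)) / ((t + h)\<^sup>2 + a)"
    using den unfolding fmap_def den_eq by (simp add: field_simps)
  also have "\<dots> = h * (- (3 * a) + t * h) / (- a + (2 * t * h + h\<^sup>2))"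
    by (subst num_eq, subst den_eq) (rule refl)
  finally show ?thesis .
qed

context
  fixes v :: "'a::field \<Rightarrow> real"
  assumes nonarch: "nonarch_abs v"
begin

lemma nonarch_abs_nonneg: "0 \<le> v x"
  and nonarch_abs_eq_0_iff: "v x = 0 \<longleftrightarrow> x = 0"
  and nonarch_abs_mult: "v (x * y) = v x * v y"
  and nonarch_abs_add_le: "v (x + y) \<le> max (v x) (v y)"
  using nonarch unfolding nonarch_abs_def by auto

lemma nonarch_abs_zero: "v 0 = 0"
  using nonarch_abs_eq_0_iff by simp

lemma nonarch_abs_pos: "x \<noteq> 0 \<Longrightarrow> 0 < v x"
  using nonarch_abs_nonneg nonarch_abs_eq_0_iff by (metis less_eq_real_def)

lemma nonarch_abs_one: "v 1 = 1"
  using nonarch_abs_mult[of 1 1] nonarch_abs_eq_0_iff[of 1] by simp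

lemma nonarch_abs_minus: "v (- x) = v x"
proof -
  have "(v (-1))\<^sup>2 = 1"
    using nonarch_abs_mult[of "-1" "-1"] nonarch_abs_one by (simp add: power2_eq_square)
  then have "v (-1) = 1"
    using nonarch_abs_nonneg[of "-1"] by (auto simp: power2_eq_1_iff)
  then show ?thesis
    using nonarch_abs_mult[of "-1" x] by simp
qed

lemma nonarch_abs_power2: "v (x\<^sup>2) = (v x)\<^sup>2"
  by (simp add: power2_eq_square nonarch_abs_mult)

lemma nonarch_abs_divide: "v (x / y) = v x / v y"
proof (cases "y = 0")
  case False
  then have "v (x / y) * v y = v x"
    using nonarch_abs_mult[of "x / y" y] by simp
  with False show ?thesis
    using nonarch_abs_pos[of y] by (simp add: field_simps)
qed (simp add: nonarch_abs_zero)

lemma nonarch_abs_add_eq: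
  assumes "v y < v x"
  shows "v (x + y) = v x"
proof (rule antisym)
  show "v (x + y) \<le> v x"
    using nonarch_abs_add_le[of x y] assms by simp
  have "v x \<le> max (v (x + y)) (v (- y))"
    using nonarch_abs_add_le[of "x + y" "- y"] by simp
  with assms show "v x \<le> v (x + y)"
    by (auto simp: nonarch_abs_minus max_def split: if_splits)
qed

lemma nonarch_abs_three: "v 2 < 1 \<Longrightarrow> v 3 = 1"
  using nonarch_abs_add_eq[of 2 1] nonarch_abs_one by simp

lemma two_cycle_cross_terms_small:
  assumes v2: "v 2 < 1" and t: "t\<^sup>2 = -2 * a" and h: "(v h)\<^sup>2 < v a"
  shows "v (t * h) < v a" and "v (2 * t * h + h\<^sup>2) < v a"
proof -
  have a_pos: "0 < v a"
    using h zero_le_power2[of "v h"] by linarith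
  have "(v t)\<^sup>2 = v 2 * v a"
    using t by (simp add: nonarch_abs_mult nonarch_abs_minus flip: nonarch_abs_power2)
  then have "(v (t * h))\<^sup>2 = v 2 * v a * (v h)\<^sup>2"
    by (simp add: nonarch_abs_mult power_mult_distrib)
  also have "\<dots> \<le> v a * (v h)\<^sup>2"
    using v2 a_pos by (intro mult_right_mono) auto
  also have "\<dots> < (v a)\<^sup>2"
    using h a_pos by (simp add: power2_eq_square)
  finally show th: "v (t * h) < v a"
    using a_pos by (simp add: power_less_imp_less_base)
  have "v (2 * t * h) \<le> v (t * h)"
    using v2 nonarch_abs_nonneg by (simp add: nonarch_abs_mult mult.assoc mult_left_le_one_le)
  moreover have "v (h\<^sup>2) < v a"
    using h by (simp add: nonarch_abs_power2)
  ultimately show "v (2 * t * h + h\<^sup>2) < v a"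
    using th nonarch_abs_add_le[of "2 * t * h" "h\<^sup>2"] by simp
qed

lemma two_cycle_shift_dist:
  assumes v2: "v 2 < 1" and t: "t\<^sup>2 = -2 * a" and h: "(v h)\<^sup>2 < v a"
  shows "v (fmap a (t + h) + t) = v h"
proof -
  note small = two_cycle_cross_terms_small[OF v2 t h]
  have a_pos: "0 < v a"
    using h zero_le_power2[of "v h"] by linarith
  have "v (- a + (2 * t * h + h\<^sup>2)) = v (- a)"
    using small(2) by (intro nonarch_abs_add_eq) (simp add: nonarch_abs_minus)
  then have v_den: "v (- a + (2 * t * h + h\<^sup>2)) = v a"
    by (simp add: nonarch_abs_minus)
  have v_3a: "v (- (3 * a)) = v a"
    using nonarch_abs_three[OF v2] by (simp add: nonarch_abs_minus nonarch_abs_mult)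
  then have "v (- (3 * a) + t * h) = v a"
    using small(1) nonarch_abs_add_eq[of "t * h" "- (3 * a)"] by simp
  then have v_num: "v (h * (- (3 * a) + t * h)) = v h * v a"
    by (simp only: nonarch_abs_mult)
  have "- a + (2 * t * h + h\<^sup>2) \<noteq> 0"
    using v_den a_pos nonarch_abs_zero by auto
  with a_pos v_den v_num show ?thesis
    by (simp add: fmap_two_cycle_shift[OF t] nonarch_abs_divide)
qed

lemma fmap_sphere_subset_opposite:
  assumes v2: "v 2 < 1" and t: "t\<^sup>2 = -2 * a" and r: "r\<^sup>2 < v a"
  shows "fmap a ` sphere_v v r t \<subseteq> sphere_v v r (- t)"
proof
  fix y assume "y \<in> fmap a ` sphere_v v r t"
  then obtain h where y: "y = fmap a (t + h)" and "v h = r"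
    unfolding sphere_v_def by force
  with two_cycle_shift_dist[OF v2 t] r show "y \<in> sphere_v v r (- t)"
    unfolding sphere_v_def by simp
qed

end

theorem theorem4p2:
  fixes v :: "'a::field_char_0 \<Rightarrow> real" and a t1 t2 :: 'a and r :: real
  assumes "C2_like v"
    and "a \<noteq> 0"
    and "t1^2 = -2 * a" and "t2 = - t1"
    and "0 < r" and "r \<le> sqrt (v a) / (2 * sqrt 2)"
  shows "fmap a ` (sphere_v v r t1 - P2 a) \<subseteq> sphere_v v r t2
       \<and> fmap a ` (sphere_v v r t2 - P2 a) \<subseteq> sphere_v v r t1"
proof -
  have nonarch: "nonarch_abs v" and v2: "v 2 < 1"
    using assms(1) unfolding C2_like_def by auto
  have va: "0 < v a"
    using nonarch_abs_pos[OF nonarch assms(2)] .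
  have "r\<^sup>2 \<le> (sqrt (v a) / (2 * sqrt 2))\<^sup>2"
    using assms(5,6) by (simp add: power_mono)
  also have "\<dots> = v a / 8"
    using va by (simp add: power_divide power_mult_distrib)
  finally have r: "r\<^sup>2 < v a"
    using va by linarith
  have t2: "t2\<^sup>2 = -2 * a"
    using assms(3,4) by simp
  show ?thesis
    using fmap_sphere_subset_opposite[OF nonarch v2 assms(3) r]
      fmap_sphere_subset_opposite[OF nonarch v2 t2 r] assms(4)
    by auto
qed

end
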